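(* Let $G$ be a group and $A$ an additive abelian group with a right $G$-action by group automorphisms. For any $a\in A$, $n\in\mathbb N$ and $g_1,\dots,g_n\in G$, $$[D^na](g_1,\dots,g_n)=a^{g_1\cdots g_n}+\sum_{s=1}^{n-1}(-1)^s\sum_{1\le i_1<\dots<i_s\le n}a^{\pi_{i_1,\dots,i_s}(g_1,\dots,g_n)}+(-1)^na.$$
   Context: Right action: $a\mapsto a^g$, $a^{\mathbf e}=a$, $(a^g)^h=a^{gh}$, additive in $a$. $\mathcal C^0(G,A)=A$; for $n\ge1$, $\mathcal C^n(G,A)$ consists of functions $G^n\to A$ vanishing whenever some argument is the identity $\mathbf e$. For $n\ge1$, $(d_nc)(g_1,\dots,g_n)=[c(g_1,\dots,g_{n-1})]^{g_n}-c(g_1,\dots,g_{n-1})$ for $c\in\mathcal C^{n-1}(G,A)$; $D^0=\mathrm{id}_A$, $D^n=d_nD^{n-1}$. For $1\le i_1<\dots<i_s\le n$, $\pi_{i_1,\dots,i_s}(g_1,\dots,g_n)$ is the ordered product $g_1\cdots g_n$ with the factors $g_{i_1},\dots,g_{i_s}$ omitted (the empty product being $\mathbf e$). *)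

theory Defs
  imports "HOL-Algebra.Group"
begin

definition right_aut_action :: "('g, 'm) monoid_scheme \<Rightarrow> ('a::ab_group_add \<Rightarrow> 'g \<Rightarrow> 'a) \<Rightarrow> bool" where
  "right_aut_action G act \<longleftrightarrow>
     (\<forall>a. act a \<one>\<^bsub>G\<^esub> = a) \<and>
     (\<forall>a g h. g \<in> carrier G \<longrightarrow> h \<in> carrier G \<longrightarrow> act (act a g) h = act a (g \<otimes>\<^bsub>G\<^esub> h)) \<and>
     (\<forall>a b g. g \<in> carrier G \<longrightarrow> act (a + b) g = act a g + act b g)"

text \<open>Cochains G^n \<rightarrow> A are represented as functions on lists (g_1,...,g_n).
  The coboundary d_n: (d c)(g_1,...,g_n) = c(g_1,...,g_{n-1})^{g_n} - c(g_1,...,g_{n-1}).\<close>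
definition cobound :: "('a::ab_group_add \<Rightarrow> 'g \<Rightarrow> 'a) \<Rightarrow> ('g list \<Rightarrow> 'a) \<Rightarrow> ('g list \<Rightarrow> 'a)" where
  "cobound act c = (\<lambda>gs. act (c (butlast gs)) (last gs) - c (butlast gs))"

fun Dpow :: "('a::ab_group_add \<Rightarrow> 'g \<Rightarrow> 'a) \<Rightarrow> nat \<Rightarrow> 'a \<Rightarrow> ('g list \<Rightarrow> 'a)" where
  "Dpow act 0 a = (\<lambda>_. a)"
| "Dpow act (Suc n) a = cobound act (Dpow act n a)"

text \<open>pi_S(g_1,...,g_n): ordered product g_1...g_n with the factors g_i (i \<in> S, 1-based) omitted;
  empty product = identity.\<close>
definition omit_prod :: "('g, 'm) monoid_scheme \<Rightarrow> 'g list \<Rightarrow> nat set \<Rightarrow> 'g" where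
  "omit_prod G gs S = foldr (\<lambda>g acc. g \<otimes>\<^bsub>G\<^esub> acc) [gs ! i. i \<leftarrow> [0..<length gs], Suc i \<notin> S] \<one>\<^bsub>G\<^esub>"

definition sgn_pow :: "nat \<Rightarrow> 'a::ab_group_add \<Rightarrow> 'a" where
  "sgn_pow s x = (if even s then x else - x)"

end

theory Submission
  imports Defs HOL.Modules
begin

text \<open>D^n a (g_1,...,g_n) is the sum over all S \<subseteq> {1..n} of (-1)^|S| a^{pi_S(g_1,...,g_n)};
  grouping the subsets by cardinality gives the statement, S = {} and S = {1..n} being the end terms.
  The subset expansion is proved by induction on n from D^{n+1} a = (D^n a)^{g_{n+1}} - D^n a:
  acting by g_{n+1} yields the terms for the subsets not containing n+1, and subtracting yields,
  with one more sign, those for the subsets containing n+1.\<close>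

lemma right_aut_action_one: "right_aut_action G act \<Longrightarrow> act a \<one>\<^bsub>G\<^esub> = a"
  unfolding right_aut_action_def by blast

lemma right_aut_action_mult:
  "right_aut_action G act \<Longrightarrow> g \<in> carrier G \<Longrightarrow> h \<in> carrier G \<Longrightarrow>
     act (act a g) h = act a (g \<otimes>\<^bsub>G\<^esub> h)"
  unfolding right_aut_action_def by blast

lemma right_aut_action_additive:
  "right_aut_action G act \<Longrightarrow> g \<in> carrier G \<Longrightarrow> additive (\<lambda>a. act a g)"
  unfolding right_aut_action_def by unfold_locales blast

lemma sgn_pow_Suc: "sgn_pow (Suc k) x = - sgn_pow k x"
  by (simp add: sgn_pow_def)

lemma additive_sgn_pow: "additive (sgn_pow k)"
  by unfold_locales (simp add: sgn_pow_def)

lemma (in additive) sgn_pow: "f (sgn_pow k x) = sgn_pow k (f x)"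
  by (simp add: sgn_pow_def minus)

lemma nth_comprehension_eq_nths: "[xs ! i. i \<leftarrow> [0..<length xs], P i] = nths xs {i. P i}"
proof (induction xs rule: rev_induct)
  case (snoc x xs)
  have "[(xs @ [x]) ! i. i \<leftarrow> [0..<length xs], P i] = [xs ! i. i \<leftarrow> [0..<length xs], P i]"
    by (intro arg_cong[where f=concat] map_cong) (auto simp: nth_append)
  with snoc show ?case by (simp add: nths_append)
qed simp

lemma nths_cong: "(\<And>i. i < length xs \<Longrightarrow> i \<in> A \<longleftrightarrow> i \<in> B) \<Longrightarrow> nths xs A = nths xs B"
  by (induction xs rule: rev_induct) (simp_all add: nths_append)

lemma omit_prod_nths: "omit_prod G xs S = foldr (\<otimes>\<^bsub>G\<^esub>) (nths xs {i. Suc i \<notin> S}) \<one>\<^bsub>G\<^esub>"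
  unfolding omit_prod_def nth_comprehension_eq_nths ..

lemma omit_prod_all: "omit_prod G xs {1..length xs} = \<one>\<^bsub>G\<^esub>"
proof -
  have "nths xs {i. Suc i \<notin> {1..length xs}} = nths xs {}"
    by (rule nths_cong) auto
  then show ?thesis
    unfolding omit_prod_nths by simp
qed

lemma omit_prod_snoc_omitted:
  "omit_prod G (xs @ [g]) (insert (Suc (length xs)) S) = omit_prod G xs S"
proof -
  let ?T = "insert (Suc (length xs)) S"
  have "nths xs {i. Suc i \<notin> ?T} = nths xs {i. Suc i \<notin> S}"
    by (rule nths_cong) auto
  moreover have "nths [g] {j. j + length xs \<in> {i. Suc i \<notin> ?T}} = []"
    by simp
  ultimately show ?thesis
    by (simp only: omit_prod_nths nths_append append_Nil2)
qed

context monoid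
begin

lemma foldr_mult_closed:
  "set xs \<subseteq> carrier G \<Longrightarrow> x \<in> carrier G \<Longrightarrow> foldr (\<otimes>) xs x \<in> carrier G"
  by (induction xs) auto

lemma foldr_mult_factor_right:
  "set xs \<subseteq> carrier G \<Longrightarrow> x \<in> carrier G \<Longrightarrow> foldr (\<otimes>) xs x = foldr (\<otimes>) xs \<one> \<otimes> x"
  by (induction xs) (auto simp: m_assoc foldr_mult_closed)

lemma omit_prod_closed: "set xs \<subseteq> carrier G \<Longrightarrow> omit_prod G xs S \<in> carrier G"
  unfolding omit_prod_nths by (rule foldr_mult_closed[OF order_trans[OF set_nths_subset] one_closed])

lemma omit_prod_snoc_kept:
  assumes "set xs \<subseteq> carrier G" "g \<in> carrier G" "Suc (length xs) \<notin> S"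
  shows "omit_prod G (xs @ [g]) S = omit_prod G xs S \<otimes> g"
proof -
  let ?K = "nths xs {i. Suc i \<notin> S}"
  have "omit_prod G (xs @ [g]) S = foldr (\<otimes>) (?K @ [g]) \<one>"
    using assms(3) unfolding omit_prod_nths nths_append by simp
  also have "\<dots> = foldr (\<otimes>) ?K g"
    using assms(2) by simp
  also have "\<dots> = omit_prod G xs S \<otimes> g"
    unfolding omit_prod_nths
    using foldr_mult_factor_right[OF order_trans[OF set_nths_subset assms(1)] assms(2)] .
  finally show ?thesis .
qed

end

lemma sum_Pow_insert:
  assumes "finite A" "x \<notin> A"
  shows "(\<Sum>S\<in>Pow (insert x A). f S) = (\<Sum>S\<in>Pow A. f S) + (\<Sum>S\<in>Pow A. f (insert x S))"
proof -
  have "inj_on (insert x) (Pow A)"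
    using assms(2) by (intro inj_onI) (metis PowD insert_ident subsetD)
  with assms show ?thesis
    unfolding Pow_insert by (subst sum.union_disjoint) (auto simp: sum.reindex)
qed

lemma sum_Pow_by_card:
  assumes "finite A"
  shows "(\<Sum>S\<in>Pow A. f S) = (\<Sum>k = 0..card A. \<Sum>S \<in> {S. S \<subseteq> A \<and> card S = k}. f S)"
  using assms by (subst sum.group[symmetric, of "Pow A" "{0..card A}" card]) (auto intro: card_mono)

lemma sum_Pow_split_card:
  assumes "finite A" "A \<noteq> {}"
  shows "(\<Sum>S\<in>Pow A. f S) =
           f {} + (\<Sum>k = 1..card A - 1. \<Sum>S \<in> {S. S \<subseteq> A \<and> card S = k}. f S) + f A"
proof -
  obtain m where m: "card A = Suc m"
    using assms by (metis card_0_eq not0_implies_Suc)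
  have "{S. S \<subseteq> A \<and> card S = 0} = {{}}"
    using assms(1) finite_subset by fastforce
  moreover have "{S. S \<subseteq> A \<and> card S = card A} = {A}"
    using assms(1) card_subset_eq by blast
  ultimately show ?thesis
    unfolding sum_Pow_by_card[OF assms(1)] m
    by (simp add: sum.atLeast0_atMost_Suc sum.atLeast_Suc_atMost)
qed

lemma act_sum_Pow_omit_prod_snoc:
  assumes G: "monoid G" and act: "right_aut_action G act"
    and xs: "set xs \<subseteq> carrier G" and g: "g \<in> carrier G"
  shows "act (\<Sum>S\<in>Pow {1..length xs}. sgn_pow (card S) (act a (omit_prod G xs S))) g =
           (\<Sum>S\<in>Pow {1..length xs}. sgn_pow (card S) (act a (omit_prod G (xs @ [g]) S)))"
proof -
  have add_g: "additive (\<lambda>a. act a g)"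
    using right_aut_action_additive[OF act g] .
  have "act (act a (omit_prod G xs S)) g = act a (omit_prod G (xs @ [g]) S)"
    if "S \<in> Pow {1..length xs}" for S
  proof -
    have "Suc (length xs) \<notin> S"
      using that by auto
    then show ?thesis
      using monoid.omit_prod_snoc_kept[OF G xs g]
        right_aut_action_mult[OF act monoid.omit_prod_closed[OF G xs] g] by simp
  qed
  then show ?thesis
    by (simp add: additive.sum[OF add_g] additive.sgn_pow[OF add_g])
qed

lemma Dpow_eq_sum_Pow:
  assumes G: "monoid G" and act: "right_aut_action G act" and gs: "set gs \<subseteq> carrier G"
  shows "Dpow act (length gs) a gs =
           (\<Sum>S\<in>Pow {1..length gs}. sgn_pow (card S) (act a (omit_prod G gs S)))"
  using gs
proof (induction gs rule: rev_induct)
  case Nil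
  then show ?case
    using right_aut_action_one[OF act] by (simp add: omit_prod_def sgn_pow_def)
next
  case (snoc g xs)
  let ?n = "length xs"
  let ?F = "\<lambda>S. sgn_pow (card S) (act a (omit_prod G (xs @ [g]) S))"
  have xs: "set xs \<subseteq> carrier G" and g: "g \<in> carrier G"
    using snoc.prems by auto
  have negated: "- Dpow act ?n a xs = (\<Sum>S\<in>Pow {1..?n}. ?F (insert (Suc ?n) S))"
  proof -
    have "?F (insert (Suc ?n) S) = - sgn_pow (card S) (act a (omit_prod G xs S))"
      if "S \<in> Pow {1..?n}" for S
    proof -
      have "Suc ?n \<notin> S" "finite S"
        using that by (auto intro: finite_subset)
      then show ?thesis
        by (simp add: omit_prod_snoc_omitted sgn_pow_Suc)
    qed
    then show ?thesis
      by (simp add: snoc.IH[OF xs] sum_negf)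
  qed
  have "{1..Suc ?n} = insert (Suc ?n) {1..?n}"
    by auto
  then have "(\<Sum>S\<in>Pow {1..Suc ?n}. ?F S)
      = (\<Sum>S\<in>Pow {1..?n}. ?F S) + (\<Sum>S\<in>Pow {1..?n}. ?F (insert (Suc ?n) S))"
    by (simp only:) (rule sum_Pow_insert; simp)
  also have "\<dots> = act (Dpow act ?n a xs) g - Dpow act ?n a xs"
    unfolding snoc.IH[OF xs] act_sum_Pow_omit_prod_snoc[OF G act xs g] negated[symmetric]
    by simp
  finally show ?case
    by (simp add: cobound_def)
qed

theorem lemma1p3:
  fixes G :: "('g, 'm) monoid_scheme"
    and act :: "'a::ab_group_add \<Rightarrow> 'g \<Rightarrow> 'a"
    and a :: 'a and n :: nat and gs :: "'g list"
  assumes "group G"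
    and "right_aut_action G act"
    and "n \<ge> 1"
    and "length gs = n"
    and "set gs \<subseteq> carrier G"
  shows "Dpow act n a gs =
           act a (omit_prod G gs {})
         + (\<Sum>s = 1..n - 1. sgn_pow s
              (\<Sum>S \<in> {S. S \<subseteq> {1..n} \<and> card S = s}. act a (omit_prod G gs S)))
         + sgn_pow n a"
proof -
  let ?t = "\<lambda>S. act a (omit_prod G gs S)"
  let ?subsets = "\<lambda>s. {S. S \<subseteq> {1..n} \<and> card S = s}"
  have "Dpow act n a gs = (\<Sum>S\<in>Pow {1..n}. sgn_pow (card S) (?t S))"
    using Dpow_eq_sum_Pow[OF group.is_monoid[OF assms(1)] assms(2,5)] assms(4) by simp
  also have "\<dots> = sgn_pow 0 (?t {})
      + (\<Sum>s = 1..n - 1. \<Sum>S \<in> ?subsets s. sgn_pow s (?t S)) + sgn_pow n (?t {1..n})"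
    using sum_Pow_split_card[of "{1..n}" "\<lambda>S. sgn_pow (card S) (?t S)"] assms(3) by simp
  also have "(\<Sum>s = 1..n - 1. \<Sum>S \<in> ?subsets s. sgn_pow s (?t S))
      = (\<Sum>s = 1..n - 1. sgn_pow s (\<Sum>S \<in> ?subsets s. ?t S))"
    by (simp add: additive.sum[OF additive_sgn_pow])
  also have "?t {1..n} = a"
    using omit_prod_all[of G gs] assms(4) right_aut_action_one[OF assms(2)] by simp
  finally show ?thesis
    by (simp add: sgn_pow_def)
qed

end
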